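(* Let $f:\mathbb{R}^d\to\mathbb{R}$ be twice differentiable and suppose there is $M>0$ with $\|\nabla^2 f(x)-\nabla^2 f(y)\|_{\mathrm{op}}\le M\|x-y\|$ for all $x,y$. Let $(x_k)_{k\in\mathbb{N}}$ be generated by the inner iteration described in the context. Then for all $k\ge1$, $$\|\nabla f(\bar x_k)\|\le\|\bar g_k\|+\frac{M}{8}kS_k.$$
   Context: Inner iteration (parameters $\sigma,\delta>0$, $\theta\in(0,1)$): given $x_0\in\mathbb{R}^d$ and a real symmetric matrix $B_0$, for $k=0,1,\dots$: let $m_k(s):=\langle \nabla f(x_k)+\frac{1}{k+1}\sum_{i=0}^k(2i+1)\nabla f(x_i),s\rangle+\frac12\langle B_ks,s\rangle+\frac{\sigma}{4}\|s\|^4$; choose any $s_k$ with $\|\nabla m_k(s_k)\|\le\delta\|s_k\|$; set $x_{k+1}=x_k+s_k$, $r_k=\nabla f(x_{k+1})-\nabla f(x_k)-B_ks_k$, and $B_{k+1}=\frac{1-\theta}{1+\theta}\big(B_k+\frac{r_ks_k^\top+s_kr_k^\top}{\|s_k\|^2}-\frac{\langle r_k,s_k\rangle}{\|s_k\|^4}s_ks_k^\top\big)$. Definitions for $k\ge1$: $\bar x_k:=\frac{1}{k(k+1)}\big(\sum_{i=0}^{k-1}(2i+1)x_i+kx_k\big)$, $\bar g_k:=\frac{1}{k(k+1)}\big(\sum_{i=0}^{k-1}(2i+1)\nabla f(x_i)+k\nabla f(x_k)\big)$, and $S_k:=\sum_{i=0}^{k-1}\|s_i\|^2$. *)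

theory Defs
  imports "HOL-Analysis.Analysis"
begin

definition inner_model ::
  "('a::euclidean_space \<Rightarrow> 'a) \<Rightarrow> (nat \<Rightarrow> 'a) \<Rightarrow> ('a \<Rightarrow> 'a) \<Rightarrow> real \<Rightarrow> nat \<Rightarrow> 'a \<Rightarrow> real" where
  "inner_model g x B \<sigma> k s =
     (g (x k) + (1 / real (k + 1)) *\<^sub>R (\<Sum>i\<le>k. real (2 * i + 1) *\<^sub>R g (x i))) \<bullet> s
     + 1 / 2 * (B s \<bullet> s) + \<sigma> / 4 * norm s ^ 4"

definition B_update :: "real \<Rightarrow> ('a::euclidean_space \<Rightarrow> 'a) \<Rightarrow> 'a \<Rightarrow> 'a \<Rightarrow> 'a \<Rightarrow> 'a" where
  "B_update \<theta> B s r = (\<lambda>v. ((1 - \<theta>) / (1 + \<theta>)) *\<^sub>R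
     (B v + ((s \<bullet> v) / norm s ^ 2) *\<^sub>R r + ((r \<bullet> v) / norm s ^ 2) *\<^sub>R s
      - ((r \<bullet> s) * (s \<bullet> v) / norm s ^ 4) *\<^sub>R s))"

definition xbar :: "(nat \<Rightarrow> 'a::real_vector) \<Rightarrow> nat \<Rightarrow> 'a" where
  "xbar x k = (1 / (real k * real (k + 1))) *\<^sub>R
     ((\<Sum>i<k. real (2 * i + 1) *\<^sub>R x i) + real k *\<^sub>R x k)"

definition gbar :: "('a::real_vector \<Rightarrow> 'a) \<Rightarrow> (nat \<Rightarrow> 'a) \<Rightarrow> nat \<Rightarrow> 'a" where
  "gbar g x k = (1 / (real k * real (k + 1))) *\<^sub>R
     ((\<Sum>i<k. real (2 * i + 1) *\<^sub>R g (x i)) + real k *\<^sub>R g (x k))"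

definition Ssum :: "(nat \<Rightarrow> 'a::real_normed_vector) \<Rightarrow> nat \<Rightarrow> real" where
  "Ssum s k = (\<Sum>i<k. norm (s i) ^ 2)"

end

theory Submission
  imports Defs
begin

text \<open>With weights w_i = 2i+1 for i < k and w_k = k, summing to W = k(k+1), the point xbar_k is the
  w-weighted mean of x_0, ..., x_k and gbar_k the w-weighted mean of the gradients. Expanding the
  gradient around xbar_k, the first-order terms cancel in the mean, so the gap between the two is
  a mean of Taylor remainders, each at most M/2 |x_i - xbar_k|^2. The weighted variance equals
  (1/2W) sum_{i,j} w_i w_j |x_i - x_j|^2; by Cauchy-Schwarz |x_i - x_j|^2 is at most k times the
  sum of |s_l|^2 over the steps l between i and j, and the total weight of the pairs separated by
  a fixed step l is 2PQ <= (P+Q)^2/2 = W^2/2. Nothing about how the steps s_k or the matrices B_k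
  are chosen is needed: the bound holds for any sequence with x_{k+1} = x_k + s_k.\<close>

lemma norm_remainder_le_lipschitz_derivative:
  fixes g :: "'a::real_normed_vector \<Rightarrow> 'b::real_normed_vector" and H :: "'a \<Rightarrow> 'a \<Rightarrow>\<^sub>L 'b"
  assumes deriv: "\<And>u. (g has_derivative H u) (at u)"
    and lip: "\<And>u. norm (H u - H y) \<le> M * norm (u - y)"
  shows "norm (g z - g y - H y (z - y)) \<le> M / 2 * norm (z - y) ^ 2"
proof -
  define d where "d = z - y"
  define F where "F = (\<lambda>t::real. g (y + t *\<^sub>R d) - t *\<^sub>R H y d)"
  define F' where "F' = (\<lambda>t::real. H (y + t *\<^sub>R d) d - H y d)"
  define P where "P = (\<lambda>t::real. M / 2 * t\<^sup>2 * norm d ^ 2)"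
  define P' where "P' = (\<lambda>t::real. M * t * norm d ^ 2)"
  have dF: "(F has_vector_derivative F' t) (at t)" for t
  proof -
    have "((\<lambda>t. y + t *\<^sub>R d) has_derivative (\<lambda>h. h *\<^sub>R d)) (at t)"
      by (auto intro!: derivative_eq_intros)
    from has_derivative_compose[OF this deriv]
    have "((\<lambda>t. g (y + t *\<^sub>R d)) has_derivative (\<lambda>h. H (y + t *\<^sub>R d) (h *\<^sub>R d))) (at t)"
      by (simp add: o_def)
    then have "(F has_derivative (\<lambda>h. H (y + t *\<^sub>R d) (h *\<^sub>R d) - h *\<^sub>R H y d)) (at t)"
      unfolding F_def by (auto intro!: derivative_eq_intros)
    then show ?thesis
      by (simp add: has_vector_derivative_def F'_def blinfun.scaleR_right scaleR_diff_right)
  qed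
  have dP: "(P has_vector_derivative P' t) (at t)" for t
    unfolding P_def P'_def has_vector_derivative_def
    by (auto intro!: derivative_eq_intros simp: algebra_simps power2_eq_square)
  have bound: "norm (F' t) \<le> P' t" if "0 < t" for t
  proof -
    have "norm (F' t) = norm ((H (y + t *\<^sub>R d) - H y) d)"
      by (simp add: F'_def blinfun.diff_left)
    also have "\<dots> \<le> norm (H (y + t *\<^sub>R d) - H y) * norm d"
      by (rule norm_blinfun)
    also have "\<dots> \<le> M * norm (t *\<^sub>R d) * norm d"
      using lip[of "y + t *\<^sub>R d"] by (simp add: mult_right_mono)
    also have "\<dots> = P' t"
      using that by (simp add: P'_def power2_eq_square)
    finally show ?thesis .
  qed
  have "norm (F 1 - F 0) \<le> P 1 - P 0"
    using dF dP bound
    by (intro differentiable_bound_general[of 0 1 F P F' P'] continuous_at_imp_continuous_on ballI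
        has_vector_derivative_continuous) auto
  then show ?thesis
    by (simp add: F_def P_def d_def algebra_simps)
qed

lemma weighted_variance_eq_pairwise:
  fixes y :: "'i \<Rightarrow> 'a::real_inner"
  assumes W: "(\<Sum>i\<in>I. a i) = W" "W \<noteq> 0"
    and c: "c = (1 / W) *\<^sub>R (\<Sum>i\<in>I. a i *\<^sub>R y i)"
  shows "(\<Sum>i\<in>I. a i * norm (y i - c) ^ 2)
    = 1 / (2 * W) * (\<Sum>i\<in>I. \<Sum>j\<in>I. a i * a j * norm (y i - y j) ^ 2)"
proof -
  define Y where "Y = (\<Sum>i\<in>I. a i *\<^sub>R y i)"
  define Q where "Q = (\<Sum>i\<in>I. a i * (y i \<bullet> y i))"
  have "(\<Sum>i\<in>I. a i * norm (y i - c) ^ 2)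
      = (\<Sum>i\<in>I. a i * (y i \<bullet> y i) - 2 * ((a i *\<^sub>R y i) \<bullet> c) + a i * (c \<bullet> c))"
    by (intro sum.cong refl)
      (simp add: power2_norm_eq_inner inner_diff_left inner_diff_right inner_commute algebra_simps)
  also have "\<dots> = Q - 2 * (Y \<bullet> c) + W * (c \<bullet> c)"
    by (simp add: sum.distrib sum_subtractf Q_def Y_def inner_sum_left sum_distrib_left
        flip: W(1) sum_distrib_right)
  also have "\<dots> = Q - (Y \<bullet> Y) / W"
    using W(2) by (simp add: c Y_def[symmetric] power2_eq_square field_simps)
  finally have variance: "(\<Sum>i\<in>I. a i * norm (y i - c) ^ 2) = Q - (Y \<bullet> Y) / W" .
  have "(\<Sum>i\<in>I. \<Sum>j\<in>I. a i * a j * norm (y i - y j) ^ 2) =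
     (\<Sum>i\<in>I. \<Sum>j\<in>I. a j * (a i * (y i \<bullet> y i)) + a i * (a j * (y j \<bullet> y j))
        - 2 * ((a i *\<^sub>R y i) \<bullet> (a j *\<^sub>R y j)))"
    by (intro sum.cong refl)
      (simp add: power2_norm_eq_inner inner_diff_left inner_diff_right inner_commute algebra_simps)
  also have "\<dots> = (\<Sum>i\<in>I. \<Sum>j\<in>I. a j * (a i * (y i \<bullet> y i)))
      + (\<Sum>i\<in>I. \<Sum>j\<in>I. a i * (a j * (y j \<bullet> y j)))
      - 2 * (\<Sum>i\<in>I. \<Sum>j\<in>I. (a i *\<^sub>R y i) \<bullet> (a j *\<^sub>R y j))"
    by (simp add: sum.distrib sum_subtractf sum_distrib_left)
  also have "(\<Sum>i\<in>I. \<Sum>j\<in>I. a j * (a i * (y i \<bullet> y i))) = W * Q"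
    by (simp add: Q_def sum_distrib_left flip: W(1) sum_distrib_right)
  also have "(\<Sum>i\<in>I. \<Sum>j\<in>I. a i * (a j * (y j \<bullet> y j))) = W * Q"
    by (simp add: Q_def sum_distrib_right flip: W(1) sum_distrib_left)
  also have "(\<Sum>i\<in>I. \<Sum>j\<in>I. (a i *\<^sub>R y i) \<bullet> (a j *\<^sub>R y j)) = Y \<bullet> Y"
    by (simp only: Y_def inner_sum_left inner_sum_right) (rule sum.swap)
  finally show ?thesis
    using variance W(2) by (simp add: field_simps)
qed

lemma norm_image_weighted_mean_diff_le:
  fixes g :: "'a::real_inner \<Rightarrow> 'b::real_normed_vector" and H :: "'a \<Rightarrow> 'a \<Rightarrow>\<^sub>L 'b"
    and y :: "'i \<Rightarrow> 'a"
  assumes deriv: "\<And>u. (g has_derivative H u) (at u)"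
    and lip: "\<And>u v. norm (H u - H v) \<le> M * norm (u - v)"
    and nonneg: "\<And>i. i \<in> I \<Longrightarrow> 0 \<le> a i"
    and W: "(\<Sum>i\<in>I. a i) = W" "0 < W"
  shows "norm (g ((1 / W) *\<^sub>R (\<Sum>i\<in>I. a i *\<^sub>R y i)) - (1 / W) *\<^sub>R (\<Sum>i\<in>I. a i *\<^sub>R g (y i)))
    \<le> M / (4 * W\<^sup>2) * (\<Sum>i\<in>I. \<Sum>j\<in>I. a i * a j * norm (y i - y j) ^ 2)"
proof -
  define c where "c = (1 / W) *\<^sub>R (\<Sum>i\<in>I. a i *\<^sub>R y i)"
  define r where "r i = g (y i) - g c - H c (y i - c)" for i
  have "(\<Sum>i\<in>I. a i *\<^sub>R r i)
      = (\<Sum>i\<in>I. a i *\<^sub>R g (y i)) - W *\<^sub>R g c - H c ((\<Sum>i\<in>I. a i *\<^sub>R y i) - W *\<^sub>R c)"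
    by (simp add: r_def W(1) scaleR_diff_right sum_subtractf blinfun.diff_right blinfun.scaleR_right
        blinfun.sum_right flip: scaleR_sum_left)
  also have "\<dots> = W *\<^sub>R ((1 / W) *\<^sub>R (\<Sum>i\<in>I. a i *\<^sub>R g (y i)) - g c)"
    using W(2) by (simp add: c_def scaleR_diff_right)
  finally have "norm (g c - (1 / W) *\<^sub>R (\<Sum>i\<in>I. a i *\<^sub>R g (y i)))
      = norm (\<Sum>i\<in>I. a i *\<^sub>R r i) / W"
    using W(2) by (simp add: norm_minus_commute)
  also have "norm (\<Sum>i\<in>I. a i *\<^sub>R r i) \<le> (\<Sum>i\<in>I. a i * (M / 2 * norm (y i - c) ^ 2))"
  proof (intro order_trans[OF norm_sum] sum_mono)
    fix i assume "i \<in> I"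
    with nonneg have "0 \<le> a i" by blast
    from mult_left_mono[OF norm_remainder_le_lipschitz_derivative[OF deriv lip] this]
    show "norm (a i *\<^sub>R r i) \<le> a i * (M / 2 * norm (y i - c) ^ 2)"
      using \<open>0 \<le> a i\<close> by (simp add: r_def)
  qed
  also have "\<dots> = M / 2 * (\<Sum>i\<in>I. a i * norm (y i - c) ^ 2)"
    by (simp add: sum_distrib_left mult_ac)
  also have "\<dots> = M / 2 * (1 / (2 * W) * (\<Sum>i\<in>I. \<Sum>j\<in>I. a i * a j * norm (y i - y j) ^ 2))"
    using weighted_variance_eq_pairwise[OF W(1) _ c_def] W(2) by simp
  finally show ?thesis
    using W(2) by (simp add: c_def divide_right_mono power2_eq_square field_simps)
qed

lemma sum_pairs_straddling_le:
  fixes a :: "'i::linorder \<Rightarrow> real"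
  shows "(\<Sum>i\<in>I. \<Sum>j\<in>I. a i * a j * of_bool (min i j \<le> l \<and> l < max i j))
    \<le> (\<Sum>i\<in>I. a i) ^ 2 / 2"
proof -
  define P where "P = (\<Sum>i\<in>I. a i * of_bool (i \<le> l))"
  define Q where "Q = (\<Sum>i\<in>I. a i * of_bool (l < i))"
  have straddle: "of_bool (min i j \<le> l \<and> l < max i j)
      = of_bool (i \<le> l) * of_bool (l < j) + of_bool (l < i) * (of_bool (j \<le> l) :: real)" for i j
    by (auto simp: min_def max_def)
  have "(\<Sum>i\<in>I. \<Sum>j\<in>I. a i * a j * of_bool (min i j \<le> l \<and> l < max i j))
      = (\<Sum>i\<in>I. \<Sum>j\<in>I. a i * of_bool (i \<le> l) * (a j * of_bool (l < j))
          + a i * of_bool (l < i) * (a j * of_bool (j \<le> l)))"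
    by (simp only: straddle algebra_simps)
  also have "\<dots> = P * Q + Q * P"
    by (simp only: P_def Q_def sum_product sum.distrib)
  also have "\<dots> \<le> (P + Q) ^ 2 / 2"
    using sum_squares_ge_zero[of "P - Q" 0] by (simp add: power2_eq_square algebra_simps)
  also have "P + Q = (\<Sum>i\<in>I. a i)"
    unfolding P_def Q_def sum.distrib[symmetric] by (intro sum.cong) auto
  finally show ?thesis .
qed

lemma norm_diff_sq_le_sum_steps:
  fixes x s :: "nat \<Rightarrow> 'a::real_normed_vector"
  assumes x_next: "\<And>n. x (Suc n) = x n + s n" and "i \<le> k" "j \<le> k"
  shows "norm (x i - x j) ^ 2
    \<le> real k * (\<Sum>l<k. of_bool (min i j \<le> l \<and> l < max i j) * norm (s l) ^ 2)"
proof -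
  define p q where "p = min i j" and "q = max i j"
  have "p \<le> q" "q \<le> k" using assms by (auto simp: p_def q_def)
  have "norm (x i - x j) = norm (x q - x p)"
    by (cases "i \<le> j") (auto simp: p_def q_def norm_minus_commute)
  also have "x q - x p = (\<Sum>l\<in>{p..<q}. s l)"
    using sum_Suc_diff'[OF \<open>p \<le> q\<close>, of x] by (simp add: x_next)
  finally have "norm (x i - x j) ^ 2 \<le> (\<Sum>l\<in>{p..<q}. norm (s l)) ^ 2"
    by (simp add: norm_sum power_mono)
  also have "\<dots> \<le> (\<Sum>l\<in>{p..<q}. norm (s l) ^ 2) * real (q - p)"
    using sum_squared_le_sum_of_squares[of "\<lambda>l. norm (s l)" "{p..<q}"] by simp
  also have "\<dots> \<le> (\<Sum>l\<in>{p..<q}. norm (s l) ^ 2) * real k"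
    using \<open>q \<le> k\<close> by (intro mult_left_mono sum_nonneg) auto
  also have "{p..<q} = {..<k} \<inter> {l. p \<le> l \<and> l < q}"
    using \<open>q \<le> k\<close> by auto
  finally show ?thesis
    by (simp add: p_def q_def mult.commute)
qed

lemma weighted_pairwise_dist_sq_le:
  fixes x s :: "nat \<Rightarrow> 'a::real_normed_vector"
  assumes x_next: "\<And>n. x (Suc n) = x n + s n" and nonneg: "\<And>i. i \<le> k \<Longrightarrow> 0 \<le> a i"
  shows "(\<Sum>i\<le>k. \<Sum>j\<le>k. a i * a j * norm (x i - x j) ^ 2)
    \<le> real k * (\<Sum>i\<le>k. a i) ^ 2 / 2 * Ssum s k"
proof -
  define crosses :: "nat \<Rightarrow> nat \<Rightarrow> nat \<Rightarrow> real"
    where "crosses i j l = of_bool (min i j \<le> l \<and> l < max i j)" for i j l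
  have "(\<Sum>i\<le>k. \<Sum>j\<le>k. a i * a j * norm (x i - x j) ^ 2)
      \<le> (\<Sum>i\<le>k. \<Sum>j\<le>k. a i * a j * (real k * (\<Sum>l<k. crosses i j l * norm (s l) ^ 2)))"
    using nonneg norm_diff_sq_le_sum_steps[where x = x and s = s, OF x_next] unfolding crosses_def
    by (intro sum_mono mult_left_mono) auto
  also have "\<dots> = real k * (\<Sum>l<k. norm (s l) ^ 2 * (\<Sum>i\<le>k. \<Sum>j\<le>k. a i * a j * crosses i j l))"
    by (simp add: sum_distrib_left mult_ac sum.swap[where A = "{..<k}"])
  also have "\<dots> \<le> real k * (\<Sum>l<k. norm (s l) ^ 2 * ((\<Sum>i\<le>k. a i) ^ 2 / 2))"
    unfolding crosses_def by (intro mult_left_mono sum_mono sum_pairs_straddling_le) auto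
  also have "(\<Sum>l<k. norm (s l) ^ 2 * ((\<Sum>i\<le>k. a i) ^ 2 / 2))
      = (\<Sum>i\<le>k. a i) ^ 2 / 2 * Ssum s k"
    by (simp add: Ssum_def sum_distrib_left mult.commute)
  finally show ?thesis
    by (simp add: mult_ac)
qed

definition xbar_weight :: "nat \<Rightarrow> nat \<Rightarrow> real" where
  "xbar_weight k i = (if i < k then real (2 * i + 1) else real k)"

lemma sum_xbar_weight: "(\<Sum>i\<le>k. xbar_weight k i) = real k * real (k + 1)"
proof -
  have "(\<Sum>i<k. real (2 * i + 1)) = real k ^ 2"
    by (induction k) (auto simp: power2_eq_square algebra_simps)
  then show ?thesis
    by (simp add: xbar_weight_def lessThan_Suc_atMost[symmetric] power2_eq_square algebra_simps)
qed

lemma xbar_eq_weighted_sum: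
  "xbar y k = (1 / (real k * real (k + 1))) *\<^sub>R (\<Sum>i\<le>k. xbar_weight k i *\<^sub>R y i)"
  by (simp add: xbar_def xbar_weight_def lessThan_Suc_atMost[symmetric])

lemma gbar_eq_xbar: "gbar g x k = xbar (\<lambda>i. g (x i)) k"
  by (simp add: gbar_def xbar_def)

theorem lemma4p2:
  fixes f :: "'a::euclidean_space \<Rightarrow> real"
    and g :: "'a \<Rightarrow> 'a"
    and H :: "'a \<Rightarrow> 'a \<Rightarrow>\<^sub>L 'a"
    and M \<sigma> \<delta> \<theta> :: real
    and x s :: "nat \<Rightarrow> 'a"
    and B :: "nat \<Rightarrow> 'a \<Rightarrow> 'a"
  assumes grad: "\<And>y. (f has_derivative (\<lambda>h. g y \<bullet> h)) (at y)"
    and hess: "\<And>y. (g has_derivative blinfun_apply (H y)) (at y)"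
    and M_pos: "M > 0"
    and lip: "\<And>y z. norm (H y - H z) \<le> M * norm (y - z)"
    and sigma_pos: "\<sigma> > 0" and delta_pos: "\<delta> > 0"
    and theta: "0 < \<theta>" "\<theta> < 1"
    and B0_lin: "linear (B 0)"
    and B0_sym: "\<And>u v. B 0 u \<bullet> v = u \<bullet> B 0 v"
    and step: "\<And>k. \<exists>G. (inner_model g x (B k) \<sigma> k has_derivative (\<lambda>h. G \<bullet> h)) (at (s k))
                       \<and> norm G \<le> \<delta> * norm (s k)"
    and x_next: "\<And>k. x (Suc k) = x k + s k"
    and B_next: "\<And>k. B (Suc k) = B_update \<theta> (B k) (s k) (g (x (Suc k)) - g (x k) - B k (s k))"
    and k_pos: "k \<ge> 1"
  shows "norm (g (xbar x k)) \<le> norm (gbar g x k) + M / 8 * real k * Ssum s k"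
proof -
  define W where "W = real k * real (k + 1)"
  have W: "(\<Sum>i\<le>k. xbar_weight k i) = W" "0 < W"
    using k_pos by (auto simp: W_def sum_xbar_weight)
  have nonneg: "0 \<le> xbar_weight k i" for i
    by (simp add: xbar_weight_def)
  have "norm (g (xbar x k) - gbar g x k)
      \<le> M / (4 * W\<^sup>2) * (\<Sum>i\<le>k. \<Sum>j\<le>k. xbar_weight k i * xbar_weight k j * norm (x i - x j) ^ 2)"
    using norm_image_weighted_mean_diff_le[OF hess lip nonneg W]
    by (simp add: gbar_eq_xbar xbar_eq_weighted_sum W_def)
  also have "\<dots> \<le> M / (4 * W\<^sup>2) * (real k * W\<^sup>2 / 2 * Ssum s k)"
    using weighted_pairwise_dist_sq_le[where x = x and s = s and a = "xbar_weight k" and k = k,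
        OF x_next nonneg] M_pos
    by (intro mult_left_mono) (simp_all add: W(1))
  also have "\<dots> = M / 8 * real k * Ssum s k"
    using W(2) by (simp add: field_simps)
  finally show ?thesis
    using norm_triangle_ineq2[of "g (xbar x k)" "gbar g x k"] by linarith
qed

end
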